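(* Let $X$ be a zero-dimensional compact metric space, $T:X\to X$ an aperiodic local homeomorphism, $N\ge1$ an integer and $m=2N$. Let $U\subseteq X$ be clopen and $V\subseteq X$ open such that: (1) the sets $T^{-2N+1}(\overline{U}),T^{-2N+2}(\overline{U}),\dots,T^{-N}(\overline{U})$ are pairwise disjoint, and $T^{-i}(T^i(U))=U$ for $i=1,\dots,N-1$; (2) the sets $T^{-2N+1}(T^N(\overline{V})),\dots,T^{-N}(T^N(\overline{V}))$ are pairwise disjoint; (3) there is $\eta>0$ such that for every $x\in\overline{V}$, every $y\in B(x,\eta)$ and every $1\le i\le N-1$, $T^{-i}(T^{i+N}(\{y\}))=\{T^N(y)\}$. Then there is a clopen set $W\subseteq X$ with $U\subseteq W$, $V\subseteq\bigcup_{0\le i\le m-1}T^{-i}(W)$, $T^{-i}(T^i(W))=W$ for $i=1,\dots,N-1$, and such that the sets $T^{-2N+1}(\overline{W}),\dots,T^{-N}(\overline{W})$ are pairwise disjoint.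
   Context: $X$ zero-dimensional: every point has a base of clopen neighbourhoods. Aperiodic: no $x$ with $T^n(x)=x$ for some $n\ge1$. For $j\ge0$, $T^{-j}(A)$ is the preimage of $A$ under $T^j$. $B(x,\eta)$ is the open ball. *)

theory Defs
  imports "HOL-Analysis.Analysis"
begin

text \<open>The space X is the whole (compact) metric type 'a.\<close>

definition zero_dimensional :: "'a::topological_space itself \<Rightarrow> bool" where
  "zero_dimensional _ \<longleftrightarrow>
     (\<forall>x::'a. \<forall>S. open S \<and> x \<in> S \<longrightarrow> (\<exists>C. open C \<and> closed C \<and> x \<in> C \<and> C \<subseteq> S))"

definition local_homeomorphism :: "('a::topological_space \<Rightarrow> 'b::topological_space) \<Rightarrow> bool" where
  "local_homeomorphism T \<longleftrightarrow> continuous_on UNIV T \<and>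
     (\<forall>x. \<exists>S. open S \<and> x \<in> S \<and> open (T ` S) \<and> (\<exists>g. homeomorphism S (T ` S) T g))"

definition aperiodic :: "('a \<Rightarrow> 'a) \<Rightarrow> bool" where
  "aperiodic T \<longleftrightarrow> (\<forall>x. \<forall>n::nat. n \<ge> 1 \<longrightarrow> (T ^^ n) x \<noteq> x)"

definition preim :: "('a \<Rightarrow> 'a) \<Rightarrow> nat \<Rightarrow> 'a set \<Rightarrow> 'a set" where
  "preim T j A = (T ^^ j) -` A"

end

theory Submission
  imports Defs
begin

text \<open>
  Put \<open>K = T\<^sup>N(closure V)\<close> and let \<open>D\<close> be the clopen set of points that reach \<open>U\<close>, or are
  reached from \<open>U\<close>, in \<open>1, \<dots>, N-1\<close> steps. Hypothesis (2) says that \<open>K\<close> does not return to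
  itself within \<open>N-1\<close> steps; by compactness neither does some open neighbourhood of \<open>K\<close>, and
  zero-dimensionality yields a clopen \<open>C \<supseteq> K - D\<close> inside that neighbourhood, disjoint from \<open>D\<close>,
  and inside the open set \<open>T\<^sup>N(\<Union>x \<in> closure V. B(x,\<eta>))\<close> on which hypothesis (3) makes the
  fibres of \<open>T\<^sup>i\<close> trivial. Then \<open>W = U \<union> C\<close> works: \<open>C\<close> is saturated because its fibres are
  trivial; avoiding \<open>D\<close> and itself within \<open>N-1\<close> steps is exactly what keeps the preimages
  \<open>T\<^sup>-\<^sup>k(W)\<close>, \<open>N \<le> k \<le> 2N-1\<close>, disjoint; and for \<open>v \<in> V\<close> either \<open>T\<^sup>N v \<in> C\<close> or
  \<open>T\<^sup>N v \<in> D\<close>, in which case the orbit of \<open>v\<close> meets \<open>U\<close> within \<open>2N-1\<close> steps.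
\<close>

definition saturated :: "('a \<Rightarrow> 'a) \<Rightarrow> nat \<Rightarrow> 'a set \<Rightarrow> bool" where
  "saturated T n A \<longleftrightarrow> (\<forall>i\<in>{1..n}. preim T i ((T ^^ i) ` A) = A)"

definition nearby_orbit :: "('a \<Rightarrow> 'a) \<Rightarrow> nat \<Rightarrow> 'a set \<Rightarrow> 'a set" where
  "nearby_orbit T n A = (\<Union>d\<in>{1..n}. preim T d A \<union> (T ^^ d) ` A)"

subsection \<open>Iterates of a local homeomorphism\<close>

lemma continuous_on_funpow:
  fixes T :: "'a::topological_space \<Rightarrow> 'a"
  assumes "continuous_on UNIV T"
  shows "continuous_on UNIV (T ^^ n)"
proof (induction n)
  case (Suc n)
  have "continuous_on UNIV (T \<circ> T ^^ n)"
    using continuous_on_compose[OF Suc continuous_on_subset[OF assms]] by simp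
  then show ?case by simp
qed simp

lemma local_homeomorphism_open_image:
  assumes "local_homeomorphism T" "open A"
  shows "open (T ` A)"
proof -
  obtain S where S: "\<And>x. open (S x) \<and> x \<in> S x \<and> open (T ` S x) \<and> (\<exists>g. homeomorphism (S x) (T ` S x) T g)"
    using assms(1) unfolding local_homeomorphism_def by metis
  have "open (T ` (A \<inter> S x))" for x
  proof -
    obtain g where "homeomorphism (S x) (T ` S x) T g" using S by blast
    moreover have "openin (top_of_set (S x)) (A \<inter> S x)"
      using assms(2) by (metis openin_open_Int inf_commute)
    ultimately have "openin (top_of_set (T ` S x)) (T ` (A \<inter> S x))"
      using homeomorphism_imp_open_map by blast
    then show ?thesis using S openin_open_trans by blast
  qed
  moreover have "T ` A = (\<Union>x\<in>A. T ` (A \<inter> S x))" using S by blast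
  ultimately show ?thesis by auto
qed

lemma local_homeomorphism_funpow_open_image:
  fixes T :: "'a::topological_space \<Rightarrow> 'a"
  assumes "local_homeomorphism T" "open A"
  shows "open ((T ^^ n) ` A)"
proof (induction n)
  case (Suc n)
  have "(T ^^ Suc n) ` A = T ` (T ^^ n) ` A" by (simp add: image_comp)
  then show ?case using local_homeomorphism_open_image[OF assms(1) Suc] by simp
qed (use assms in simp)

lemma closed_open_nearby_orbit:
  fixes T :: "'a::t2_space \<Rightarrow> 'a"
  assumes "local_homeomorphism T" "compact U" "open U"
  shows "closed (nearby_orbit T n U)" "open (nearby_orbit T n U)"
proof -
  have cont: "continuous_on UNIV (T ^^ d)" for d
    using assms(1) continuous_on_funpow unfolding local_homeomorphism_def by blast
  have "closed ((T ^^ d) ` U)" for d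
    using compact_continuous_image[OF continuous_on_subset[OF cont] assms(2)]
    by (simp add: compact_imp_closed)
  then show "closed (nearby_orbit T n U)"
    unfolding nearby_orbit_def preim_def
    using closed_vimage[OF compact_imp_closed[OF assms(2)] cont] by blast
  show "open (nearby_orbit T n U)"
    unfolding nearby_orbit_def preim_def
    using open_vimage[OF assms(3) cont] local_homeomorphism_funpow_open_image[OF assms(1,3)]
    by blast
qed

subsection \<open>Clopen and open separating sets\<close>

lemma zero_dimensional_clopen_between:
  assumes "zero_dimensional TYPE('a::topological_space)" "compact (L::'a set)" "open S" "L \<subseteq> S"
  obtains C where "open C" "closed C" "L \<subseteq> C" "C \<subseteq> S"
proof -
  have "\<forall>x\<in>L. \<exists>C. open C \<and> closed C \<and> x \<in> C \<and> C \<subseteq> S"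
    using assms(1,3,4) unfolding zero_dimensional_def by blast
  then obtain C where C: "\<And>x. x \<in> L \<Longrightarrow> open (C x) \<and> closed (C x) \<and> x \<in> C x \<and> C x \<subseteq> S"
    by metis
  then have "L \<subseteq> (\<Union>x\<in>L. C x)" by blast
  then obtain F where F: "F \<subseteq> L" "finite F" "L \<subseteq> (\<Union>x\<in>F. C x)"
    using compactE_image[OF assms(2), of L C] C by blast
  show ?thesis
  proof (rule that)
    show "open (\<Union>x\<in>F. C x)" using F(1) C by (intro open_UN) blast
    show "closed (\<Union>x\<in>F. C x)" using F(1) C by (intro closed_UN[OF F(2)]) blast
    show "\<Union> (C ` F) \<subseteq> S" using F(1) C by blast
  qed (rule F(3))
qed

lemma open_neighbourhood_disjoint_from_preimage:
  fixes f :: "'a::metric_space \<Rightarrow> 'a"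
  assumes "compact (UNIV :: 'a set)" "continuous_on UNIV f" "compact K" "K \<inter> f -` K = {}"
  obtains P where "open P" "K \<subseteq> P" "P \<inter> f -` P = {}"
proof (cases "K = {}")
  case nonempty: False
  define g where "g z = infdist z K + infdist (f z) K" for z
  have "closed K" using assms(3) compact_imp_closed by blast
  have g_pos: "g z > 0" for z
  proof (cases "z \<in> K")
    case True
    then have "f z \<notin> K" using assms(4) by blast
    then show ?thesis
      using infdist_pos_not_in_closed[OF \<open>closed K\<close> nonempty] infdist_nonneg[of z K]
      unfolding g_def by (simp add: add_nonneg_pos)
  next
    case False
    then show ?thesis
      using infdist_pos_not_in_closed[OF \<open>closed K\<close> nonempty] infdist_nonneg[of "f z" K]
      unfolding g_def by (simp add: add_pos_nonneg)
  qed
  have "continuous_on UNIV g"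
    unfolding g_def by (intro continuous_intros assms(2))
  then obtain z0 where z0: "\<And>z. g z0 \<le> g z"
    using continuous_attains_inf[OF assms(1)] by blast
  show ?thesis
  proof (rule that[of "{z. infdist z K < g z0 / 2}"])
    show "open {z. infdist z K < g z0 / 2}"
      by (intro open_Collect_less continuous_intros)
    show "K \<subseteq> {z. infdist z K < g z0 / 2}"
      using g_pos[of z0] by auto
    show "{z. infdist z K < g z0 / 2} \<inter> f -` {z. infdist z K < g z0 / 2} = {}"
    proof (rule equals0I)
      fix z assume "z \<in> {z. infdist z K < g z0 / 2} \<inter> f -` {z. infdist z K < g z0 / 2}"
      then have "infdist z K < g z0 / 2" "infdist (f z) K < g z0 / 2" by auto
      then have "g z < g z0" unfolding g_def[of z] by linarith
      with z0[of z] show False by simp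
    qed
  qed
qed (use that[of "{}"] in simp)

lemma open_neighbourhood_disjoint_from_preimages:
  fixes f :: "nat \<Rightarrow> 'a::metric_space \<Rightarrow> 'a"
  assumes "compact (UNIV :: 'a set)" "finite S" "\<And>d. d \<in> S \<Longrightarrow> continuous_on UNIV (f d)"
    and "compact K" "\<And>d. d \<in> S \<Longrightarrow> K \<inter> f d -` K = {}"
  obtains P where "open P" "K \<subseteq> P" "\<And>d. d \<in> S \<Longrightarrow> P \<inter> f d -` P = {}"
proof -
  have "\<forall>d\<in>S. \<exists>P. open P \<and> K \<subseteq> P \<and> P \<inter> f d -` P = {}"
  proof
    fix d assume d: "d \<in> S"
    obtain P where "open P" "K \<subseteq> P" "P \<inter> f d -` P = {}"
      using open_neighbourhood_disjoint_from_preimage[OF assms(1) assms(3)[OF d] assms(4) assms(5)[OF d]] .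
    then show "\<exists>P. open P \<and> K \<subseteq> P \<and> P \<inter> f d -` P = {}" by blast
  qed
  from bchoice[OF this] obtain P
    where P: "\<forall>d\<in>S. open (P d) \<and> K \<subseteq> P d \<and> P d \<inter> f d -` P d = {}" ..
  show ?thesis
  proof (rule that[of "\<Inter>d\<in>S. P d"])
    show "open (\<Inter>d\<in>S. P d)"
      by (rule open_INT[OF assms(2)]) (use P in blast)
    show "K \<subseteq> (\<Inter>d\<in>S. P d)"
      by (rule INT_greatest) (use P in blast)
    fix d assume "d \<in> S"
    then have "(\<Inter>d\<in>S. P d) \<subseteq> P d" "P d \<inter> f d -` P d = {}"
      using P by auto
    then show "(\<Inter>d\<in>S. P d) \<inter> f d -` (\<Inter>d\<in>S. P d) = {}"
      by (metis (no_types) Int_mono bot.extremum_uniqueI vimage_mono)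
  qed
qed

lemma zero_dimensional_clopen_no_return:
  fixes T :: "'a::metric_space \<Rightarrow> 'a"
  assumes "compact (UNIV :: 'a set)" "zero_dimensional TYPE('a)" "continuous_on UNIV T"
    and "compact L" "open S" "L \<subseteq> S" "\<And>d. d \<in> {1..n} \<Longrightarrow> L \<inter> preim T d L = {}"
  obtains C where "open C" "closed C" "L \<subseteq> C" "C \<subseteq> S"
    "\<forall>d\<in>{1..n}. C \<inter> preim T d C = {}"
proof -
  obtain P where "open P" "L \<subseteq> P" and P: "\<And>d. d \<in> {1..n} \<Longrightarrow> P \<inter> (T ^^ d) -` P = {}"
    using open_neighbourhood_disjoint_from_preimages[where f = "\<lambda>d. T ^^ d", OF assms(1) finite_atLeastAtMost]
      continuous_on_funpow[OF assms(3)] assms(4,7) unfolding preim_def by metis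
  have "open (S \<inter> P)" "L \<subseteq> S \<inter> P" using assms(5,6) \<open>open P\<close> \<open>L \<subseteq> P\<close> by auto
  then obtain C where C: "open C" "closed C" "L \<subseteq> C" "C \<subseteq> S \<inter> P"
    using zero_dimensional_clopen_between[OF assms(2,4)] by blast
  show ?thesis
  proof (rule that)
    show "\<forall>d\<in>{1..n}. C \<inter> preim T d C = {}"
      using P C(4) unfolding preim_def by blast
  qed (use C in auto)
qed

subsection \<open>Disjointness of preimages\<close>

lemma disjoint_family_onI_less:
  fixes A :: "'i::linorder \<Rightarrow> 'a set"
  assumes "\<And>j k. j \<in> S \<Longrightarrow> k \<in> S \<Longrightarrow> j < k \<Longrightarrow> A j \<inter> A k = {}"
  shows "disjoint_family_on A S"
  unfolding disjoint_family_on_def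
proof (intro ballI impI)
  fix j k assume "j \<in> S" "k \<in> S" "j \<noteq> k"
  then show "A j \<inter> A k = {}"
    using assms[of j k] assms[of k j] by (cases "j < k") (auto simp: Int_commute)
qed

lemma preim_Int_preim_eq_empty:
  assumes "\<And>d. d \<in> {1..n} \<Longrightarrow> A \<inter> preim T d B = {}" "j < k" "k \<le> j + n"
  shows "preim T j A \<inter> preim T k B = {}"
proof -
  have "k = (k - j) + j" using assms(2) by simp
  then have shift: "(T ^^ k) x = (T ^^ (k - j)) ((T ^^ j) x)" for x
    using funpow_add[of "k - j" j T] by (metis comp_apply)
  have "A \<inter> preim T (k - j) B = {}" using assms by (intro assms(1)) auto
  then show ?thesis unfolding preim_def by (auto simp: shift)
qed

lemma disjoint_family_on_preim_Un:
  assumes "disjoint_family_on (\<lambda>k. preim T k A) {a..a+n}"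
    and "disjoint_family_on (\<lambda>k. preim T k B) {a..a+n}"
    and "\<And>d. d \<in> {1..n} \<Longrightarrow> A \<inter> preim T d B = {}"
    and "\<And>d. d \<in> {1..n} \<Longrightarrow> B \<inter> preim T d A = {}"
  shows "disjoint_family_on (\<lambda>k. preim T k (A \<union> B)) {a..a+n}"
proof -
  have "preim T j (A \<union> B) \<inter> preim T k (A \<union> B) = {}"
    if "j \<in> {a..a+n}" "k \<in> {a..a+n}" "j < k" for j k
  proof -
    have "preim T j A \<inter> preim T k A = {}" "preim T j B \<inter> preim T k B = {}"
      using assms(1,2) that unfolding disjoint_family_on_def by auto
    moreover have "k \<le> j + n" using that by auto
    then have "preim T j A \<inter> preim T k B = {}" "preim T j B \<inter> preim T k A = {}"
      using preim_Int_preim_eq_empty[OF assms(3) \<open>j < k\<close>] preim_Int_preim_eq_empty[OF assms(4) \<open>j < k\<close>]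
      by auto
    ultimately show ?thesis unfolding preim_def by blast
  qed
  then show ?thesis by (rule disjoint_family_onI_less)
qed

lemma disjoint_family_on_preim_if_no_return:
  assumes "\<And>d. d \<in> {1..n} \<Longrightarrow> A \<inter> preim T d A = {}"
  shows "disjoint_family_on (\<lambda>k. preim T k A) {a..a+n}"
proof (rule disjoint_family_onI_less)
  fix j k assume "j \<in> {a..a+n}" "k \<in> {a..a+n}" "j < k"
  then show "preim T j A \<inter> preim T k A = {}"
    by (intro preim_Int_preim_eq_empty[OF assms]) auto
qed

lemma image_funpow_no_return:
  assumes "disjoint_family_on (\<lambda>k. preim T k ((T ^^ a) ` A)) {a..a+n}" "d \<in> {1..n}"
  shows "(T ^^ a) ` A \<inter> preim T d ((T ^^ a) ` A) = {}"
proof -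
  have "(T ^^ (a + d)) x = (T ^^ d) ((T ^^ a) x)" for x
    by (simp add: add.commute[of a d] funpow_add)
  moreover have "preim T a ((T ^^ a) ` A) \<inter> preim T (a + d) ((T ^^ a) ` A) = {}"
    using assms unfolding disjoint_family_on_def by auto
  ultimately show ?thesis unfolding preim_def by fastforce
qed

subsection \<open>Adjoining a set to a saturated set\<close>

lemma saturated_Un:
  "saturated T n A \<Longrightarrow> saturated T n B \<Longrightarrow> saturated T n (A \<union> B)"
  unfolding saturated_def preim_def by (simp add: image_Un)

lemma saturated_if_trivial_fibres:
  assumes "\<And>c i. c \<in> C \<Longrightarrow> i \<in> {1..n} \<Longrightarrow> preim T i ((T ^^ i) ` {c}) = {c}"
  shows "saturated T n C"
  unfolding saturated_def
proof
  fix i assume i: "i \<in> {1..n}"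
  show "preim T i ((T ^^ i) ` C) = C"
  proof
    show "preim T i ((T ^^ i) ` C) \<subseteq> C"
    proof
      fix x assume "x \<in> preim T i ((T ^^ i) ` C)"
      then obtain c where "c \<in> C" "x \<in> preim T i ((T ^^ i) ` {c})" unfolding preim_def by auto
      then show "x \<in> C" using assms i by auto
    qed
  qed (auto simp: preim_def)
qed

lemma disjoint_family_on_preim_Un_no_return:
  assumes "disjoint_family_on (\<lambda>k. preim T k U) {a..a+n}"
    and "\<And>d. d \<in> {1..n} \<Longrightarrow> C \<inter> preim T d C = {}"
    and "C \<inter> nearby_orbit T n U = {}"
  shows "disjoint_family_on (\<lambda>k. preim T k (U \<union> C)) {a..a+n}"
proof (rule disjoint_family_on_preim_Un[OF assms(1) disjoint_family_on_preim_if_no_return[OF assms(2)]])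
  fix d assume "d \<in> {1..n}"
  then show "U \<inter> preim T d C = {}" "C \<inter> preim T d U = {}"
    using assms(3) unfolding nearby_orbit_def preim_def by blast+
qed

lemma orbit_meets_if_nearby:
  assumes "saturated T n U" "n < N" "(T ^^ N) v \<in> nearby_orbit T n U"
  shows "\<exists>i \<le> N + n. (T ^^ i) v \<in> U"
proof -
  obtain d where d: "d \<in> {1..n}" "(T ^^ N) v \<in> preim T d U \<or> (T ^^ N) v \<in> (T ^^ d) ` U"
    using assms(3) unfolding nearby_orbit_def by blast
  have shift: "(T ^^ (d + j)) v = (T ^^ d) ((T ^^ j) v)" for j
    by (simp add: funpow_add)
  show ?thesis
  proof (cases "(T ^^ N) v \<in> preim T d U")
    case True
    then have "(T ^^ (d + N)) v \<in> U" using shift unfolding preim_def by simp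
    then show ?thesis using d by (intro exI[of _ "d + N"]) auto
  next
    case False
    have "d \<le> N" using d assms(2) by auto
    then have "(T ^^ N) v = (T ^^ d) ((T ^^ (N - d)) v)"
      using shift[of "N - d"] by simp
    then have "(T ^^ (N - d)) v \<in> preim T d ((T ^^ d) ` U)"
      using d False unfolding preim_def by auto
    then have "(T ^^ (N - d)) v \<in> U"
      using assms(1) d unfolding saturated_def by auto
    then show ?thesis by (intro exI[of _ "N - d"]) auto
  qed
qed

lemma preim_subset_UN_preim_Un:
  assumes "saturated T n U" "n < N" "K \<subseteq> C \<union> nearby_orbit T n U"
  shows "preim T N K \<subseteq> (\<Union>i\<le>N+n. preim T i (U \<union> C))"
proof
  fix v assume "v \<in> preim T N K"
  then have "(T ^^ N) v \<in> C \<or> (T ^^ N) v \<in> nearby_orbit T n U"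
    using assms(3) unfolding preim_def by blast
  then have "\<exists>i \<le> N + n. (T ^^ i) v \<in> U \<union> C"
  proof
    assume "(T ^^ N) v \<in> C"
    then show ?thesis by (intro exI[of _ N]) auto
  qed (use orbit_meets_if_nearby[OF assms(1,2)] in blast)
  then show "v \<in> (\<Union>i\<le>N+n. preim T i (U \<union> C))" unfolding preim_def by blast
qed

lemma saturated_clopen_extension:
  fixes T :: "'a::metric_space \<Rightarrow> 'a"
  assumes "compact (UNIV :: 'a set)" "zero_dimensional TYPE('a)" "local_homeomorphism T"
    and "open U" "closed U" "saturated T n U" "disjoint_family_on (\<lambda>k. preim T k U) {N..N+n}" "n < N"
    and "open G" "\<And>c i. c \<in> G \<Longrightarrow> i \<in> {1..n} \<Longrightarrow> preim T i ((T ^^ i) ` {c}) = {c}"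
    and "compact K" "K \<subseteq> G" "\<And>d. d \<in> {1..n} \<Longrightarrow> K \<inter> preim T d K = {}"
  obtains W where "open W" "closed W" "U \<subseteq> W" "preim T N K \<subseteq> (\<Union>i\<le>N+n. preim T i W)"
    "saturated T n W" "disjoint_family_on (\<lambda>k. preim T k W) {N..N+n}"
proof -
  define D where "D = nearby_orbit T n U"
  have cont: "continuous_on UNIV T" using assms(3) unfolding local_homeomorphism_def by blast
  have "compact U" using compact_Int_closed[OF assms(1,5)] by simp
  then have "closed D" "open D"
    unfolding D_def using closed_open_nearby_orbit[OF assms(3) _ assms(4)] by auto
  have "K - D \<subseteq> G - D" using assms(12) by blast
  moreover have "(K - D) \<inter> preim T d (K - D) = {}" if "d \<in> {1..n}" for d
    using assms(13)[OF that] unfolding preim_def by blast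
  ultimately obtain C where C: "open C" "closed C" "K - D \<subseteq> C" "C \<subseteq> G - D"
    and no_return: "\<forall>d\<in>{1..n}. C \<inter> preim T d C = {}"
    by (rule zero_dimensional_clopen_no_return[OF assms(1,2) cont compact_diff[OF assms(11) \<open>open D\<close>]
        open_Diff[OF assms(9) \<open>closed D\<close>]])
  have "saturated T n C"
    using assms(10) C(4) by (intro saturated_if_trivial_fibres) blast
  show ?thesis
  proof (rule that[of "U \<union> C"])
    show "open (U \<union> C)" "closed (U \<union> C)" "U \<subseteq> U \<union> C"
      using assms(4,5) C(1,2) by auto
    show "preim T N K \<subseteq> (\<Union>i\<le>N+n. preim T i (U \<union> C))"
      by (rule preim_subset_UN_preim_Un[OF assms(6,8)]) (use C(3) in \<open>auto simp: D_def\<close>)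
    show "saturated T n (U \<union> C)"
      by (rule saturated_Un[OF assms(6) \<open>saturated T n C\<close>])
    show "disjoint_family_on (\<lambda>k. preim T k (U \<union> C)) {N..N+n}"
      by (rule disjoint_family_on_preim_Un_no_return[OF assms(7) no_return[rule_format]])
        (use C(4) in \<open>auto simp: D_def\<close>)
  qed
qed

theorem lemma4p6:
  fixes T :: "'a::metric_space \<Rightarrow> 'a" and N m :: nat and U V :: "'a set"
  assumes "compact (UNIV :: 'a set)"
    and "zero_dimensional TYPE('a)"
    and "local_homeomorphism T"
    and "aperiodic T"
    and "N \<ge> 1" and "m = 2 * N"
    and "open U" and "closed U" and "open V"
    and "disjoint_family_on (\<lambda>k. preim T k (closure U)) {N..2*N-1}"
    and "\<forall>i\<in>{1..N-1}. preim T i ((T ^^ i) ` U) = U"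
    and "disjoint_family_on (\<lambda>k. preim T k ((T ^^ N) ` closure V)) {N..2*N-1}"
    and "\<exists>\<eta>>0. \<forall>x\<in>closure V. \<forall>y\<in>ball x \<eta>. \<forall>i\<in>{1..N-1}.
            preim T i ((T ^^ (i + N)) ` {y}) = {(T ^^ N) y}"
  shows "\<exists>W. open W \<and> closed W \<and> U \<subseteq> W \<and>
           V \<subseteq> (\<Union>i\<in>{0..m-1}. preim T i W) \<and>
           (\<forall>i\<in>{1..N-1}. preim T i ((T ^^ i) ` W) = W) \<and>
           disjoint_family_on (\<lambda>k. preim T k (closure W)) {N..2*N-1}"
proof -
  obtain \<eta> where "\<eta> > 0" and fibres: "\<forall>x\<in>closure V. \<forall>y\<in>ball x \<eta>. \<forall>i\<in>{1..N-1}.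
      preim T i ((T ^^ (i + N)) ` {y}) = {(T ^^ N) y}"
    using assms(13) by blast
  define G where "G = (T ^^ N) ` (\<Union>x\<in>closure V. ball x \<eta>)"
  define K where "K = (T ^^ N) ` closure V"
  have window: "{N..2*N-1} = {N..N+(N-1)}" by (simp add: mult_2)
  have "N - 1 < N" using assms(5) by simp
  have "open G"
    unfolding G_def by (intro local_homeomorphism_funpow_open_image[OF assms(3)] open_UN) auto
  have G_fibres: "preim T i ((T ^^ i) ` {c}) = {c}" if "c \<in> G" "i \<in> {1..N-1}" for c i
    using that fibres unfolding G_def by (auto simp: funpow_add)
  have "compact K"
    unfolding K_def using compact_Int_closed[OF assms(1), of "closure V"] assms(3)
    by (intro compact_continuous_image continuous_on_subset[OF continuous_on_funpow])
      (auto simp: local_homeomorphism_def)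
  have "K \<subseteq> G"
    unfolding K_def G_def using \<open>\<eta> > 0\<close> by (intro image_mono) auto
  have K_no_return: "K \<inter> preim T d K = {}" if "d \<in> {1..N-1}" for d
    using image_funpow_no_return[OF assms(12)[unfolded window] that] unfolding K_def .
  have "saturated T (N - 1) U"
    using assms(11) unfolding saturated_def .
  have "disjoint_family_on (\<lambda>k. preim T k U) {N..N+(N-1)}"
    using assms(10) unfolding window closure_closed[OF assms(8)] .
  then obtain W where W: "open W" "closed W" "U \<subseteq> W"
      "preim T N K \<subseteq> (\<Union>i\<le>N+(N-1). preim T i W)" "saturated T (N - 1) W"
      "disjoint_family_on (\<lambda>k. preim T k W) {N..N+(N-1)}"
    using saturated_clopen_extension[OF assms(1-3,7,8) \<open>saturated T (N - 1) U\<close> _ \<open>N - 1 < N\<close>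
        \<open>open G\<close> G_fibres \<open>compact K\<close> \<open>K \<subseteq> G\<close> K_no_return]
    by blast
  have "V \<subseteq> preim T N K"
    unfolding K_def preim_def using closure_subset by blast
  moreover have "{..N + (N - 1)} = {0..m-1}"
    using assms(5,6) by auto
  ultimately show ?thesis
    using W closure_closed[OF W(2)] unfolding window saturated_def by (intro exI[of _ W]) auto
qed

end
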